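(* Let $\kappa>0$, $u_0>0$, and let $u$ be the solution of $\frac{d}{dr}\big(u'/\sqrt{1+u'^2}\big)=\kappa u$, $u(0)=u_0$, $u'(0)=0$. Let $a>0$ and $0\le\gamma<\pi/2$ be such that $u$ is defined on $[0,a)$ and $\sin\psi(a)=\cos\gamma$, where $\sin\psi=u'/\sqrt{1+u'^2}$ (extended continuously to $r=a$). Then $$\frac{\cos\gamma}{a\kappa}-\frac a{\cos\gamma}+\frac{a\tan\gamma}2+\frac a{2\cos^2\gamma}\Big(\frac\pi2-\gamma\Big)<u_0<u_0^+<\frac{\cos\gamma}{a\kappa},$$ where $u_0^+$ is the number with $F(u_0^+;1/(\kappa u_0))=\cos\gamma/\kappa$, for $$F(x;R)=a(R+x)-\frac a2\sqrt{R^2-a^2}-\frac{R^2}2\arcsin\Big(\frac aR\Big).$$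
   Context: $u$ is the profile of a $\kappa$-cylindrical capillary surface $z=u(x)$ between vertical plates $x=\pm a$ with contact angle $\gamma$; $u_0$ is the center height. The function $x\mapsto F(x;R)$ is strictly increasing. *)

theory Defs
  imports "HOL-Analysis.Analysis"
begin

definition capF :: "real \<Rightarrow> real \<Rightarrow> real \<Rightarrow> real" where
  "capF a x R = a * (R + x) - (a / 2) * sqrt (R\<^sup>2 - a\<^sup>2) - (R\<^sup>2 / 2) * arcsin (a / R)"

end

theory Submission
  imports Defs
begin

text \<open>
  Write \<open>sin \<psi> = u' / sqrt (1 + u'\<^sup>2)\<close>, so that \<open>(sin \<psi>)' = \<kappa> u\<close>. The profile is squeezed
  between two circular arcs through \<open>(0, u\<^sub>0)\<close>. As \<open>u\<close> increases from \<open>u\<^sub>0\<close>,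
  \<open>sin \<psi> r > \<kappa> u\<^sub>0 r = r / R\<close> with \<open>R = 1 / (\<kappa> u\<^sub>0)\<close>, so \<open>u\<close> lies above the arc of radius \<open>R\<close>;
  as \<open>(sin \<psi>)' = \<kappa> u\<close> increases, \<open>sin \<psi>\<close> is convex and lies below its chord \<open>r cos \<gamma> / a\<close>, so
  \<open>u\<close> lies below the arc of radius \<open>a / cos \<gamma>\<close>. Integrating, \<open>cos \<gamma> = \<kappa> \<integral>\<^sub>0\<^sup>a u\<close> is compared
  with the explicit areas under the two arcs: the lower arc gives \<open>F(u\<^sub>0; R) < cos \<gamma> / \<kappa> = F(u\<^sub>0\<^sup>+; R)\<close>,
  the upper arc gives the lower bound for \<open>u\<^sub>0\<close>, and \<open>u\<^sub>0\<^sup>+ < cos \<gamma> / (a \<kappa>)\<close> because the area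
  under a circle of radius \<open>R\<close> over \<open>[0, a]\<close> is less than \<open>R a\<close>.
\<close>

lemma DERIV_less_imp_diff_less:
  fixes f g f' g' :: "real \<Rightarrow> real"
  assumes "p < q" and "continuous_on {p..q} f" and "continuous_on {p..q} g"
    and "\<And>x. p < x \<Longrightarrow> x < q \<Longrightarrow> (f has_real_derivative f' x) (at x)"
    and "\<And>x. p < x \<Longrightarrow> x < q \<Longrightarrow> (g has_real_derivative g' x) (at x)"
    and "\<And>x. p < x \<Longrightarrow> x < q \<Longrightarrow> f' x < g' x"
  shows "f q - f p < g q - g p"
proof -
  have "(\<lambda>x. g x - f x) p < (\<lambda>x. g x - f x) q"
  proof (rule DERIV_pos_imp_increasing_open[OF \<open>p < q\<close>])
    fix x assume "p < x" "x < q"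
    then show "\<exists>y. ((\<lambda>x. g x - f x) has_real_derivative y) (at x) \<and> 0 < y"
      using assms(4-6) by (intro exI[of _ "g' x - f' x"]) (simp add: DERIV_diff)
  next
    show "continuous_on {p..q} (\<lambda>x. g x - f x)"
      using assms(2,3) by (rule continuous_on_diff[rotated])
  qed
  then show ?thesis by simp
qed

lemma DERIV_less_imp_diff_less_at_left:
  fixes f g f' g' :: "real \<Rightarrow> real"
  assumes "p < q" and "continuous_on {p..<q} f" and "continuous_on {p..<q} g"
    and "\<And>x. p < x \<Longrightarrow> x < q \<Longrightarrow> (f has_real_derivative f' x) (at x)"
    and "\<And>x. p < x \<Longrightarrow> x < q \<Longrightarrow> (g has_real_derivative g' x) (at x)"
    and "\<And>x. p < x \<Longrightarrow> x < q \<Longrightarrow> f' x < g' x"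
    and "(f \<longlongrightarrow> F) (at_left q)" and "(g \<longlongrightarrow> G) (at_left q)"
  shows "F - f p < G - g p"
proof -
  define m where "m = (p + q) / 2"
  have m: "p < m" "m < q" using \<open>p < q\<close> by (simp_all add: m_def)
  have diff_less: "f t - f s < g t - g s" if "p \<le> s" "s < t" "t < q" for s t
  proof (rule DERIV_less_imp_diff_less[where f'=f' and g'=g'])
    show "continuous_on {s..t} f" "continuous_on {s..t} g"
      using that by (auto intro: continuous_on_subset[OF assms(2)] continuous_on_subset[OF assms(3)])
  qed (use that assms(4-6) in auto)
  have "f m - f p < g m - g p" using diff_less m by simp
  moreover have "F - f m \<le> G - g m"
  proof (rule tendsto_le[OF _ tendsto_diff[OF assms(8) tendsto_const] tendsto_diff[OF assms(7) tendsto_const]])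
    show "\<forall>\<^sub>F t in at_left q. f t - f m \<le> g t - g m"
      using eventually_at_left_real[OF \<open>m < q\<close>]
      by eventually_elim (use diff_less m in \<open>auto intro: less_imp_le\<close>)
  qed simp
  ultimately show ?thesis by linarith
qed

lemma sin_arctan_less_iff: "sin (arctan x) < sin (arctan y) \<longleftrightarrow> x < y"
proof -
  have "- (pi / 2) \<le> arctan t" "arctan t \<le> pi / 2" for t
    using arctan_bounded[of t] by auto
  then show ?thesis by (simp add: sin_mono_less_eq arctan_less_iff)
qed

lemma sin_arctan_pos_iff: "0 < sin (arctan x) \<longleftrightarrow> 0 < x"
  using sin_arctan_less_iff[of 0 x] by simp

lemma sin_arctan_nonneg_iff: "0 \<le> sin (arctan x) \<longleftrightarrow> 0 \<le> x"
  using sin_arctan_less_iff[of x 0] by (metis arctan_zero_zero not_less sin_zero)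

definition arc :: "real \<Rightarrow> real \<Rightarrow> real" where
  "arc R x = R - sqrt (R\<^sup>2 - x\<^sup>2)"

lemma square_diff_square_pos: "\<bar>x\<bar> < R \<Longrightarrow> 0 < R\<^sup>2 - x\<^sup>2"
  for x R :: real
  using power_strict_mono[OF _ abs_ge_zero, of x R 2] by simp

lemma arc_0 [simp]: "0 \<le> R \<Longrightarrow> arc R 0 = 0"
  by (simp add: arc_def)

lemma continuous_on_arc: "continuous_on S (arc R)"
  unfolding arc_def[abs_def] by (intro continuous_intros)

lemma has_real_derivative_arc:
  assumes "\<bar>x\<bar> < R"
  shows "(arc R has_real_derivative x / sqrt (R\<^sup>2 - x\<^sup>2)) (at x)"
proof -
  have "0 < R\<^sup>2 - x\<^sup>2" using square_diff_square_pos[OF assms] .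
  then have "((\<lambda>x. R - sqrt (R\<^sup>2 - x\<^sup>2)) has_real_derivative
      inverse (sqrt (R\<^sup>2 - x\<^sup>2)) * x) (at x)"
    by (auto intro!: derivative_eq_intros)
  then show ?thesis
    unfolding arc_def[abs_def] by (metis divide_inverse_commute)
qed

lemma sin_arctan_arc_slope:
  assumes "\<bar>x\<bar> < R"
  shows "sin (arctan (x / sqrt (R\<^sup>2 - x\<^sup>2))) = x / R"
proof -
  have pos: "0 < R\<^sup>2 - x\<^sup>2" using square_diff_square_pos[OF assms] .
  have "1 + (x / sqrt (R\<^sup>2 - x\<^sup>2))\<^sup>2 = R\<^sup>2 / (R\<^sup>2 - x\<^sup>2)"
    using pos by (simp add: power_divide field_simps)
  then have "sqrt (1 + (x / sqrt (R\<^sup>2 - x\<^sup>2))\<^sup>2) = R / sqrt (R\<^sup>2 - x\<^sup>2)"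
    using assms by (simp add: real_sqrt_divide)
  then show ?thesis
    using pos by (simp add: sin_arctan)
qed

text \<open>\<open>circle_primitive R x = \<integral>\<^sub>0\<^sup>x sqrt (R\<^sup>2 - t\<^sup>2) dt\<close>.\<close>

definition circle_primitive :: "real \<Rightarrow> real \<Rightarrow> real" where
  "circle_primitive R x = x * sqrt (R\<^sup>2 - x\<^sup>2) / 2 + R\<^sup>2 / 2 * arcsin (x / R)"

lemma has_real_derivative_circle_primitive:
  assumes "\<bar>x\<bar> < R"
  shows "(circle_primitive R has_real_derivative sqrt (R\<^sup>2 - x\<^sup>2)) (at x)"
proof -
  define s where "s = sqrt (R\<^sup>2 - x\<^sup>2)"
  have "0 < R\<^sup>2 - x\<^sup>2" using square_diff_square_pos[OF assms] .
  then have s_pos: "0 < s" and s_square: "s\<^sup>2 = R\<^sup>2 - x\<^sup>2" by (simp_all add: s_def)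
  have R_pos: "0 < R" using assms by linarith
  have bounds: "-1 < x / R" "x / R < 1" using assms R_pos by (auto simp: field_simps abs_less_iff)
  have "1 - (x / R)\<^sup>2 = (s / R)\<^sup>2"
    using s_square R_pos by (simp add: power_divide field_simps)
  then have sqrt_arcsin: "sqrt (1 - (x / R)\<^sup>2) = s / R"
    using s_pos R_pos by simp
  have d_sqrt: "((\<lambda>x. sqrt (R\<^sup>2 - x\<^sup>2)) has_real_derivative - (x / s)) (at x)"
    using DERIV_diff[OF DERIV_const has_real_derivative_arc[OF assms], of R]
    by (simp add: arc_def[abs_def] s_def)
  have d_arcsin: "((\<lambda>y. arcsin (y / R)) has_real_derivative inverse (s / R) * (1 / R)) (at x)"
    using DERIV_chain2[where g="\<lambda>y. y / R", OF DERIV_arcsin[OF bounds] DERIV_cdivide[OF DERIV_ident]]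
    by (simp add: sqrt_arcsin)
  have "(circle_primitive R has_real_derivative
      (x * - (x / s) + 1 * sqrt (R\<^sup>2 - x\<^sup>2)) / 2 + R\<^sup>2 / 2 * (inverse (s / R) * (1 / R))) (at x)"
    unfolding circle_primitive_def[abs_def]
    by (intro DERIV_add DERIV_cdivide DERIV_cmult DERIV_mult' DERIV_ident d_sqrt d_arcsin)
  moreover have "(x * - (x / s) + 1 * s) / 2 + R\<^sup>2 / 2 * (inverse (s / R) * (1 / R)) = s"
    using s_pos R_pos s_square by (simp add: field_simps power2_eq_square)
  ultimately show ?thesis by (simp only: s_def)
qed

lemma continuous_on_circle_primitive: "0 < R \<Longrightarrow> continuous_on {-R..R} (circle_primitive R)"
  unfolding circle_primitive_def[abs_def]
  by (intro continuous_intros) (auto simp: field_simps)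

lemma circle_primitive_0 [simp]: "circle_primitive R 0 = 0"
  by (simp add: circle_primitive_def)

lemma circle_primitive_less:
  assumes "0 < x" and "x \<le> R"
  shows "circle_primitive R x < R * x"
proof -
  have "circle_primitive R x - circle_primitive R 0 < R * x - R * 0"
  proof (rule DERIV_less_imp_diff_less[where f'="\<lambda>y. sqrt (R\<^sup>2 - y\<^sup>2)" and g'="\<lambda>_. R"])
    show "continuous_on {0..x} (circle_primitive R)"
      by (rule continuous_on_subset[OF continuous_on_circle_primitive]) (use assms in auto)
    show "sqrt (R\<^sup>2 - y\<^sup>2) < R" if "0 < y" "y < x" for y
      using that assms real_sqrt_less_mono[of "R\<^sup>2 - y\<^sup>2" "R\<^sup>2"] by simp
  qed (use assms in \<open>auto intro!: has_real_derivative_circle_primitive derivative_eq_intros\<close>)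
  then show ?thesis by simp
qed

lemma circle_primitive_secant:
  assumes "0 < a" and "0 \<le> \<gamma>" and "\<gamma> < pi / 2"
  shows "circle_primitive (a / cos \<gamma>) a = a\<^sup>2 * tan \<gamma> / 2 + (a / cos \<gamma>)\<^sup>2 / 2 * (pi / 2 - \<gamma>)"
proof -
  have cos_pos: "0 < cos \<gamma>" using assms by (intro cos_gt_zero_pi) auto
  have "(a / cos \<gamma>)\<^sup>2 - a\<^sup>2 = (a * tan \<gamma>)\<^sup>2"
    using cos_pos by (simp add: tan_def power_divide field_simps sin_squared_eq)
  moreover have "0 \<le> a * tan \<gamma>"
    using assms cos_pos sin_ge_zero[of \<gamma>] by (simp add: tan_def)
  ultimately have "sqrt ((a / cos \<gamma>)\<^sup>2 - a\<^sup>2) = a * tan \<gamma>" by simp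
  moreover have "arcsin (a / (a / cos \<gamma>)) = pi / 2 - \<gamma>"
    using arcsin_sin[of "pi / 2 - \<gamma>"] assms by (simp add: sin_cos_eq)
  ultimately show ?thesis
    by (simp add: circle_primitive_def power2_eq_square)
qed

lemma capF_eq_circle_primitive: "capF a x R = a * (R + x) - circle_primitive R a"
  by (simp add: capF_def circle_primitive_def)

lemma has_real_derivative_arc_primitive:
  assumes "\<bar>x\<bar> < R"
  shows "((\<lambda>x. (c + R) * x - circle_primitive R x) has_real_derivative c + arc R x) (at x)"
proof -
  have "((\<lambda>x. (c + R) * x - circle_primitive R x) has_real_derivative
      (c + R) * 1 - sqrt (R\<^sup>2 - x\<^sup>2)) (at x)"
    by (intro DERIV_diff DERIV_cmult DERIV_ident has_real_derivative_circle_primitive assms)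
  then show ?thesis by (simp add: arc_def add_diff_eq)
qed

lemma continuous_on_arc_primitive:
  "0 < b \<Longrightarrow> b \<le> R \<Longrightarrow> continuous_on {0..b} (\<lambda>x. (c + R) * x - circle_primitive R x)"
  by (intro continuous_intros continuous_on_subset[OF continuous_on_circle_primitive]) auto

locale capillary_profile =
  fixes \<kappa> a :: real and u u' :: "real \<Rightarrow> real"
  assumes kappa_pos: "0 < \<kappa>"
    and height_0_pos: "0 < u 0"
    and slope_0: "u' 0 = 0"
    and height_has_derivative:
      "\<And>r. r \<in> {0..<a} \<Longrightarrow> (u has_real_derivative u' r) (at r within {0..<a})"
    and sin_inclination_has_derivative:
      "\<And>r. r \<in> {0..<a} \<Longrightarrow>
        ((\<lambda>r. sin (arctan (u' r))) has_real_derivative \<kappa> * u r) (at r within {0..<a})"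
begin

definition sin_psi :: "real \<Rightarrow> real" where
  "sin_psi r = sin (arctan (u' r))"

lemma sin_psi_0 [simp]: "sin_psi 0 = 0"
  by (simp add: sin_psi_def slope_0)

lemma at_within_domain: "0 < r \<Longrightarrow> r < a \<Longrightarrow> at r within {0..<a} = at r"
  by (rule at_within_interior) simp

lemma has_real_derivative_height: "0 < r \<Longrightarrow> r < a \<Longrightarrow> (u has_real_derivative u' r) (at r)"
  using height_has_derivative[of r] at_within_domain[of r] by simp

lemma has_real_derivative_sin_psi:
  "0 < r \<Longrightarrow> r < a \<Longrightarrow> (sin_psi has_real_derivative \<kappa> * u r) (at r)"
  using sin_inclination_has_derivative[of r] at_within_domain[of r]
  by (simp add: sin_psi_def[abs_def])

lemma continuous_on_height: "continuous_on {0..<a} u"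
  unfolding continuous_on_eq_continuous_within
  using height_has_derivative DERIV_continuous by blast

lemma continuous_on_sin_psi: "continuous_on {0..<a} sin_psi"
  unfolding continuous_on_eq_continuous_within sin_psi_def[abs_def]
  using sin_inclination_has_derivative DERIV_continuous by blast

lemma height_0_le_if_pos_below:
  assumes "0 < z" and "z < a" and pos: "\<And>t. 0 \<le> t \<Longrightarrow> t < z \<Longrightarrow> 0 < u t"
  shows "u 0 \<le> u z"
proof (rule DERIV_nonneg_imp_increasing_open[where f = u])
  show "continuous_on {0..z} u"
    by (rule continuous_on_subset[OF continuous_on_height]) (use assms in auto)
  fix x assume x: "0 < x" "x < z"
  have "sin_psi 0 \<le> sin_psi x"
  proof (rule DERIV_nonneg_imp_increasing_open[where f = sin_psi])
    show "continuous_on {0..x} sin_psi"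
      by (rule continuous_on_subset[OF continuous_on_sin_psi]) (use assms x in auto)
    show "\<exists>y. (sin_psi has_real_derivative y) (at t) \<and> 0 \<le> y" if "0 < t" "t < x" for t
    proof (intro exI conjI)
      show "(sin_psi has_real_derivative \<kappa> * u t) (at t)"
        using that x assms by (intro has_real_derivative_sin_psi) auto
      show "0 \<le> \<kappa> * u t"
        using that x pos[of t] kappa_pos by simp
    qed
  qed (use x in simp)
  then have "0 \<le> u' x" by (simp add: sin_psi_def slope_0 sin_arctan_nonneg_iff)
  moreover have "(u has_real_derivative u' x) (at x)"
    using x assms by (intro has_real_derivative_height) auto
  ultimately show "\<exists>y. (u has_real_derivative y) (at x) \<and> 0 \<le> y" by blast
qed (use assms in simp)

lemma height_pos:
  assumes "0 \<le> r" and "r < a"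
  shows "0 < u r"
proof (rule ccontr)
  assume "\<not> 0 < u r"
  define Z where "Z = {0..r} \<inter> u -` {..0}"
  have "closed Z"
    unfolding Z_def
    by (rule continuous_closed_preimage[OF continuous_on_subset[OF continuous_on_height]])
      (use assms in auto)
  moreover have "r \<in> Z" and "bdd_below Z"
    using assms \<open>\<not> 0 < u r\<close> by (auto simp: Z_def)
  ultimately have "Inf Z \<in> Z" using closed_contains_Inf by blast
  define z where "z = Inf Z"
  have first_zero: "0 < u t" if "0 \<le> t" "t < z" for t
    using cInf_lower[OF _ \<open>bdd_below Z\<close>, of t] that \<open>Inf Z \<in> Z\<close> by (force simp: Z_def z_def)
  have z: "0 \<le> z" "z \<le> r" "u z \<le> 0"
    using \<open>Inf Z \<in> Z\<close> by (auto simp: Z_def z_def)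
  with height_0_pos have "0 < z" by (cases "z = 0") auto
  then have "u 0 \<le> u z"
    using z assms first_zero by (intro height_0_le_if_pos_below) auto
  with z height_0_pos show False by simp
qed

lemma sin_psi_pos:
  assumes "0 < r" and "r < a"
  shows "0 < sin_psi r"
proof -
  have "0 - 0 < sin_psi r - sin_psi 0"
  proof (rule DERIV_less_imp_diff_less[where f = "\<lambda>_. 0" and g = sin_psi and f' = "\<lambda>_. 0"
        and g' = "\<lambda>t. \<kappa> * u t"])
    show "continuous_on {0..r} sin_psi"
      by (rule continuous_on_subset[OF continuous_on_sin_psi]) (use assms in auto)
    show "0 < \<kappa> * u t" if "0 < t" "t < r" for t
      using that assms height_pos[of t] kappa_pos by simp
  qed (use assms in \<open>auto intro: has_real_derivative_sin_psi\<close>)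
  then show ?thesis by simp
qed

lemma slope_pos: "0 < r \<Longrightarrow> r < a \<Longrightarrow> 0 < u' r"
  using sin_psi_pos by (simp add: sin_psi_def sin_arctan_pos_iff)

lemma height_strict_mono:
  assumes "0 \<le> x" and "x < y" and "y < a"
  shows "u x < u y"
proof -
  have "0 - 0 < u y - u x"
  proof (rule DERIV_less_imp_diff_less[where f = "\<lambda>_. 0" and g = u and f' = "\<lambda>_. 0" and g' = u'])
    show "continuous_on {x..y} u"
      by (rule continuous_on_subset[OF continuous_on_height]) (use assms in auto)
  qed (use assms in \<open>auto intro: has_real_derivative_height slope_pos\<close>)
  then show ?thesis by simp
qed

lemma linear_less_sin_psi:
  assumes "0 < r" and "r < a"
  shows "\<kappa> * u 0 * r < sin_psi r"
proof -
  have "\<kappa> * u 0 * r - \<kappa> * u 0 * 0 < sin_psi r - sin_psi 0"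
  proof (rule DERIV_less_imp_diff_less[where f' = "\<lambda>_. \<kappa> * u 0" and g' = "\<lambda>t. \<kappa> * u t"])
    show "continuous_on {0..r} sin_psi"
      by (rule continuous_on_subset[OF continuous_on_sin_psi]) (use assms in auto)
    show "\<kappa> * u 0 < \<kappa> * u t" if "0 < t" "t < r" for t
      using that assms height_strict_mono[of 0 t] kappa_pos by simp
  qed (use assms in \<open>auto intro!: has_real_derivative_sin_psi derivative_eq_intros\<close>)
  then show ?thesis by simp
qed

lemma arc_less_height:
  assumes "0 < b" and "b < a" and "b \<le> R"
    and sin_psi_above: "\<And>y. 0 < y \<Longrightarrow> y < b \<Longrightarrow> y / R < sin_psi y"
  shows "u 0 + arc R b < u b"
proof -
  have "arc R b - arc R 0 < u b - u 0"
  proof (rule DERIV_less_imp_diff_less[where f' = "\<lambda>y. y / sqrt (R\<^sup>2 - y\<^sup>2)" and g' = u'])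
    show "continuous_on {0..b} u"
      by (rule continuous_on_subset[OF continuous_on_height]) (use assms in auto)
    show "y / sqrt (R\<^sup>2 - y\<^sup>2) < u' y" if "0 < y" "y < b" for y
    proof -
      have "sin (arctan (y / sqrt (R\<^sup>2 - y\<^sup>2))) < sin (arctan (u' y))"
        using sin_psi_above[OF that] sin_arctan_arc_slope[of y R] that assms
        by (simp add: sin_psi_def)
      then show ?thesis by (simp only: sin_arctan_less_iff)
    qed
  qed (use assms in \<open>auto intro: continuous_on_arc has_real_derivative_arc has_real_derivative_height\<close>)
  then show ?thesis using assms by simp
qed

lemma height_less_arc:
  assumes "0 < b" and "b < a" and "b \<le> R"
    and sin_psi_below: "\<And>y. 0 < y \<Longrightarrow> y < b \<Longrightarrow> sin_psi y < y / R"
  shows "u b < u 0 + arc R b"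
proof -
  have "u b - u 0 < arc R b - arc R 0"
  proof (rule DERIV_less_imp_diff_less[where f' = u' and g' = "\<lambda>y. y / sqrt (R\<^sup>2 - y\<^sup>2)"])
    show "continuous_on {0..b} u"
      by (rule continuous_on_subset[OF continuous_on_height]) (use assms in auto)
    show "u' y < y / sqrt (R\<^sup>2 - y\<^sup>2)" if "0 < y" "y < b" for y
    proof -
      have "sin (arctan (u' y)) < sin (arctan (y / sqrt (R\<^sup>2 - y\<^sup>2)))"
        using sin_psi_below[OF that] sin_arctan_arc_slope[of y R] that assms
        by (simp add: sin_psi_def)
      then show ?thesis by (simp only: sin_arctan_less_iff)
    qed
  qed (use assms in \<open>auto intro: continuous_on_arc has_real_derivative_arc has_real_derivative_height\<close>)
  then show ?thesis using assms by simp
qed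

text \<open>\<open>\<sigma>\<close> is the sine of the contact inclination, \<open>sin \<psi> a = cos \<gamma>\<close>.\<close>

context
  fixes \<sigma> :: real
  assumes a_pos: "0 < a" and sin_psi_tendsto: "(sin_psi \<longlongrightarrow> \<sigma>) (at_left a)"
begin

lemma linear_less_sin_contact: "\<kappa> * u 0 * a < \<sigma>"
proof -
  have "\<kappa> * u 0 * a - \<kappa> * u 0 * 0 < \<sigma> - sin_psi 0"
  proof (rule DERIV_less_imp_diff_less_at_left[where f = "\<lambda>x. \<kappa> * u 0 * x" and g = sin_psi
        and f' = "\<lambda>_. \<kappa> * u 0" and g' = "\<lambda>t. \<kappa> * u t"])
    show "\<kappa> * u 0 < \<kappa> * u t" if "0 < t" "t < a" for t
      using that height_strict_mono[of 0 t] kappa_pos by simp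
  qed (use a_pos sin_psi_tendsto continuous_on_sin_psi in
    \<open>auto intro!: has_real_derivative_sin_psi derivative_eq_intros continuous_intros tendsto_intros\<close>)
  then show ?thesis by simp
qed

lemma sin_contact_le_1: "\<sigma> \<le> 1"
  by (rule tendsto_upperbound[OF sin_psi_tendsto]) (simp_all add: sin_psi_def)

lemma sin_psi_less_chord:
  assumes "0 < b" and "b < a"
  shows "sin_psi b < b * \<sigma> / a"
proof -
  have "sin_psi b - sin_psi 0 < \<kappa> * u b * b - \<kappa> * u b * 0"
  proof (rule DERIV_less_imp_diff_less[where f' = "\<lambda>t. \<kappa> * u t" and g' = "\<lambda>_. \<kappa> * u b"])
    show "continuous_on {0..b} sin_psi"
      by (rule continuous_on_subset[OF continuous_on_sin_psi]) (use assms in auto)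
    show "\<kappa> * u t < \<kappa> * u b" if "0 < t" "t < b" for t
      using that assms height_strict_mono[of t b] kappa_pos by simp
  qed (use assms in \<open>auto intro!: has_real_derivative_sin_psi derivative_eq_intros\<close>)
  then have mean_slope: "sin_psi b / b < \<kappa> * u b"
    using assms by (simp add: field_simps)
  have "sin_psi b / b * a - sin_psi b / b * b < \<sigma> - sin_psi b"
  proof (rule DERIV_less_imp_diff_less_at_left[where f = "\<lambda>t. sin_psi b / b * t" and g = sin_psi
        and f' = "\<lambda>_. sin_psi b / b" and g' = "\<lambda>t. \<kappa> * u t"])
    show "continuous_on {b..<a} sin_psi"
      by (rule continuous_on_subset[OF continuous_on_sin_psi]) (use assms in auto)
    show "sin_psi b / b < \<kappa> * u t" if "b < t" "t < a" for t
    proof -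
      have "\<kappa> * u b < \<kappa> * u t"
        using that assms height_strict_mono[of b t] kappa_pos by simp
      then show ?thesis using mean_slope by linarith
    qed
  qed (use assms sin_psi_tendsto in
    \<open>auto intro!: has_real_derivative_sin_psi derivative_eq_intros continuous_intros tendsto_intros\<close>)
  then show ?thesis
    using assms by (simp add: field_simps)
qed

text \<open>The next two lemmas compare integrals with \<open>\<sigma> = \<kappa> \<integral>\<^sub>0\<^sup>a u\<close>.\<close>

lemma primitive_less_sin_contact:
  assumes "continuous_on {0..a} W"
    and "\<And>x. 0 < x \<Longrightarrow> x < a \<Longrightarrow> (W has_real_derivative w x) (at x)"
    and "\<And>x. 0 < x \<Longrightarrow> x < a \<Longrightarrow> w x < u x"
  shows "\<kappa> * (W a - W 0) < \<sigma>"
proof -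
  have "\<kappa> * W a - \<kappa> * W 0 < \<sigma> - sin_psi 0"
  proof (rule DERIV_less_imp_diff_less_at_left[where f = "\<lambda>x. \<kappa> * W x" and f' = "\<lambda>x. \<kappa> * w x"
        and g' = "\<lambda>x. \<kappa> * u x"])
    show "continuous_on {0..<a} (\<lambda>x. \<kappa> * W x)"
      by (intro continuous_intros continuous_on_subset[OF assms(1)]) auto
    show "((\<lambda>x. \<kappa> * W x) \<longlongrightarrow> \<kappa> * W a) (at_left a)"
      using continuous_on_Icc_at_leftD[OF assms(1) a_pos] by (intro tendsto_intros)
  qed (use a_pos assms(2,3) kappa_pos sin_psi_tendsto continuous_on_sin_psi in
    \<open>auto intro: has_real_derivative_sin_psi DERIV_cmult\<close>)
  then show ?thesis by (simp add: algebra_simps)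
qed

lemma sin_contact_less_primitive:
  assumes "continuous_on {0..a} W"
    and "\<And>x. 0 < x \<Longrightarrow> x < a \<Longrightarrow> (W has_real_derivative w x) (at x)"
    and "\<And>x. 0 < x \<Longrightarrow> x < a \<Longrightarrow> u x < w x"
  shows "\<sigma> < \<kappa> * (W a - W 0)"
proof -
  have "\<sigma> - sin_psi 0 < \<kappa> * W a - \<kappa> * W 0"
  proof (rule DERIV_less_imp_diff_less_at_left[where g = "\<lambda>x. \<kappa> * W x" and g' = "\<lambda>x. \<kappa> * w x"
        and f' = "\<lambda>x. \<kappa> * u x"])
    show "continuous_on {0..<a} (\<lambda>x. \<kappa> * W x)"
      by (intro continuous_intros continuous_on_subset[OF assms(1)]) auto
    show "((\<lambda>x. \<kappa> * W x) \<longlongrightarrow> \<kappa> * W a) (at_left a)"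
      using continuous_on_Icc_at_leftD[OF assms(1) a_pos] by (intro tendsto_intros)
  qed (use a_pos assms(2,3) kappa_pos sin_psi_tendsto continuous_on_sin_psi in
    \<open>auto intro: has_real_derivative_sin_psi DERIV_cmult\<close>)
  then show ?thesis by (simp add: algebra_simps)
qed

lemma width_less_radius: "a < 1 / (\<kappa> * u 0)"
  using linear_less_sin_contact sin_contact_le_1 kappa_pos height_0_pos
  by (simp add: field_simps)

lemma lower_circle_bound:
  defines "R \<equiv> 1 / (\<kappa> * u 0)"
  shows "\<kappa> * ((u 0 + R) * a - circle_primitive R a) < \<sigma>"
proof -
  have "a < R" using width_less_radius by (simp add: R_def)
  have "\<kappa> * (((u 0 + R) * a - circle_primitive R a) - ((u 0 + R) * 0 - circle_primitive R 0)) < \<sigma>"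
  proof (rule primitive_less_sin_contact[where w = "\<lambda>x. u 0 + arc R x"])
    show "u 0 + arc R x < u x" if "0 < x" "x < a" for x
    proof (rule arc_less_height)
      show "y / R < sin_psi y" if "0 < y" "y < x" for y
        using linear_less_sin_psi[of y] that \<open>x < a\<close> kappa_pos height_0_pos
        by (simp add: R_def field_simps)
    qed (use that \<open>a < R\<close> in auto)
  qed (use a_pos \<open>a < R\<close> in \<open>auto intro: continuous_on_arc_primitive has_real_derivative_arc_primitive\<close>)
  then show ?thesis by simp
qed

lemma upper_circle_bound:
  defines "R \<equiv> a / \<sigma>"
  shows "\<sigma> < \<kappa> * ((u 0 + R) * a - circle_primitive R a)"
proof -
  have "0 < \<kappa> * u 0 * a" using kappa_pos height_0_pos a_pos by simp
  then have "0 < \<sigma>" using linear_less_sin_contact by linarith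
  then have "a \<le> R" using sin_contact_le_1 a_pos by (simp add: R_def field_simps)
  have "\<sigma> < \<kappa> * (((u 0 + R) * a - circle_primitive R a) - ((u 0 + R) * 0 - circle_primitive R 0))"
  proof (rule sin_contact_less_primitive[where w = "\<lambda>x. u 0 + arc R x"])
    show "u x < u 0 + arc R x" if "0 < x" "x < a" for x
    proof (rule height_less_arc)
      show "sin_psi y < y / R" if "0 < y" "y < x" for y
        using sin_psi_less_chord[of y] that \<open>x < a\<close> by (simp add: R_def)
    qed (use that \<open>a \<le> R\<close> in auto)
  qed (use a_pos \<open>a \<le> R\<close> in \<open>auto intro: continuous_on_arc_primitive has_real_derivative_arc_primitive\<close>)
  then show ?thesis by simp
qed

end

end

theorem mainTheorem10:
  fixes \<kappa> u\<^sub>0 a \<gamma> :: real and u u' :: "real \<Rightarrow> real"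
  assumes "\<kappa> > 0" and "u\<^sub>0 > 0" and "a > 0"
    and "0 \<le> \<gamma>" and "\<gamma> < pi / 2"
    and "\<And>r. r \<in> {0..<a} \<Longrightarrow> (u has_real_derivative u' r) (at r within {0..<a})"
    and "\<And>r. r \<in> {0..<a} \<Longrightarrow>
          ((\<lambda>s. u' s / sqrt (1 + (u' s)\<^sup>2)) has_real_derivative \<kappa> * u r) (at r within {0..<a})"
    and "u 0 = u\<^sub>0" and "u' 0 = 0"
    and "((\<lambda>s. u' s / sqrt (1 + (u' s)\<^sup>2)) \<longlongrightarrow> cos \<gamma>) (at_left a)"
    and "capF a u\<^sub>0\<^sub>p (1 / (\<kappa> * u\<^sub>0)) = cos \<gamma> / \<kappa>"
  shows "cos \<gamma> / (a * \<kappa>) - a / cos \<gamma> + a * tan \<gamma> / 2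
           + a / (2 * (cos \<gamma>)\<^sup>2) * (pi / 2 - \<gamma>) < u\<^sub>0
         \<and> u\<^sub>0 < u\<^sub>0\<^sub>p \<and> u\<^sub>0\<^sub>p < cos \<gamma> / (a * \<kappa>)"
proof -
  interpret capillary_profile \<kappa> a u u'
    using assms(1,2,6-9) by unfold_locales (simp_all add: sin_arctan)
  have contact: "(sin_psi \<longlongrightarrow> cos \<gamma>) (at_left a)"
    using assms(10) by (simp add: sin_psi_def[abs_def] sin_arctan)
  define R where "R = 1 / (\<kappa> * u\<^sub>0)"
  have capF_u0p: "a * (R + u\<^sub>0\<^sub>p) - circle_primitive R a = cos \<gamma> / \<kappa>"
    using assms(11) by (simp add: R_def capF_eq_circle_primitive)
  have "\<kappa> * ((u\<^sub>0 + R) * a - circle_primitive R a) < \<kappa> * (a * (R + u\<^sub>0\<^sub>p) - circle_primitive R a)"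
    using lower_circle_bound[OF assms(3) contact] capF_u0p assms(1,8) by (simp add: R_def)
  then have u0_less_u0p: "u\<^sub>0 < u\<^sub>0\<^sub>p"
    using assms(1,3) by (simp add: algebra_simps)
  have "circle_primitive R a < R * a"
    using circle_primitive_less[of a R] width_less_radius[OF assms(3) contact] assms(3,8)
    by (simp add: R_def)
  then have "a * u\<^sub>0\<^sub>p < cos \<gamma> / \<kappa>"
    using capF_u0p by (simp add: algebra_simps)
  then have u0p_less: "u\<^sub>0\<^sub>p < cos \<gamma> / (a * \<kappa>)"
    using assms(1,3) by (simp add: field_simps)
  have "0 < cos \<gamma>" using assms(4,5) by (intro cos_gt_zero_pi) auto
  then have less_u0: "cos \<gamma> / (a * \<kappa>) - a / cos \<gamma> + a * tan \<gamma> / 2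
      + a / (2 * (cos \<gamma>)\<^sup>2) * (pi / 2 - \<gamma>) < u\<^sub>0"
    using upper_circle_bound[OF assms(3) contact] circle_primitive_secant[OF assms(3-5)] assms(1,3,8)
    by (simp add: field_simps power2_eq_square)
  show ?thesis using less_u0 u0_less_u0p u0p_less by blast
qed

end
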